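(* Let $p_1<p_2<\dots<p_N$ be positive prime numbers and set $k_i=\sqrt{p_i}$ for $i=1,\dots,N$. For $i\neq j$ define the function $\tilde A_{ij}(x)=\cos((k_i-k_j)x)$ of $x\in\mathbb{R}$, whose (fundamental) period is $t_{ij}=2\pi/|k_i-k_j|$. Let $(i,j)$ and $(i',j')$ be index pairs with $i>j$, $i'>j'$ and $\{i,j\}\neq\{i',j'\}$, and let $t_1=t_{ij}$, $t_2=t_{i'j'}$. Then there exist no nonzero integers $n_1,n_2$ such that $n_1t_1=n_2t_2$.
   Context: The functions $\tilde A_{ij}(x)$ are the entries of $\mathbf{Z}\mathbf{Z}^\top$ where $\mathbf{Z}\in\mathbb{R}^{N\times 2}$ has $i$-th row $(\cos(k_ix),\sin(k_ix))$. *)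

theory Defs
  imports "HOL-Analysis.Analysis"
begin

definition wavenum :: "(nat \<Rightarrow> nat) \<Rightarrow> nat \<Rightarrow> real" where
  "wavenum p i = sqrt (real (p i))"

definition Atilde :: "(nat \<Rightarrow> nat) \<Rightarrow> nat \<Rightarrow> nat \<Rightarrow> real \<Rightarrow> real" where
  "Atilde p i j x = cos ((wavenum p i - wavenum p j) * x)"

definition period :: "(nat \<Rightarrow> nat) \<Rightarrow> nat \<Rightarrow> nat \<Rightarrow> real" where
  "period p i j = 2 * pi / \<bar>wavenum p i - wavenum p j\<bar>"

end

theory Submission
  imports Defs
begin

(* Commensurable periods t_ij and t_i'j' mean n1 (k_i' - k_j') = n2 (k_i - k_j) with
   nonzero integers n1, n2. If the pairs share an index, this is a rational relation
   x sqrt P = y sqrt Q + z sqrt R with y, z nonzero, and squaring makes sqrt (Q R) rational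
   for distinct primes Q, R. Otherwise four distinct primes occur, and squaring twice makes
   the square root of their product rational. Both contradict the irrationality of sqrt (P X)
   for a prime P not dividing X. *)

lemma sqrt_prime_mult_not_Rats:
  fixes P X :: nat
  assumes "prime P" "\<not> P dvd X"
  shows "sqrt (real (P * X)) \<notin> \<rat>"
proof
  assume "sqrt (real (P * X)) \<in> \<rat>"
  then obtain m n :: nat where "n \<noteq> 0" and "\<bar>sqrt (real (P * X))\<bar> = m / n"
      and "coprime m n"
    by (rule Rats_abs_nat_div_natE)
  then have "real m = sqrt (real (P * X)) * n"
    by simp
  then have "real (m\<^sup>2) = real (P * X * n\<^sup>2)"
    by (simp add: power_mult_distrib)
  then have eq: "m\<^sup>2 = P * X * n\<^sup>2"
    by (simp only: of_nat_eq_iff)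
  then have "P dvd m\<^sup>2"
    by simp
  with \<open>prime P\<close> have "P dvd m"
    by (rule prime_dvd_power)
  then obtain k where "m = P * k" ..
  with eq have "X * n\<^sup>2 = P * k\<^sup>2"
    using prime_gt_0_nat[OF \<open>prime P\<close>] by (simp add: power2_eq_square ac_simps)
  then have "P dvd n"
    using assms by (metis dvd_triv_left prime_dvd_mult_iff prime_dvd_power)
  with \<open>P dvd m\<close> \<open>coprime m n\<close> \<open>prime P\<close> show False
    by (metis coprime_common_divisor not_prime_unit)
qed

lemma sqrt_mult_distinct_primes_not_Rats:
  fixes P Q :: nat
  assumes "prime P" "prime Q" "P \<noteq> Q"
  shows "sqrt (real (P * Q)) \<notin> \<rat>"
  using assms by (metis primes_dvd_imp_eq sqrt_prime_mult_not_Rats)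

lemma sqrt_mult_four_distinct_primes_not_Rats:
  fixes A B C D :: nat
  assumes "prime A" "prime B" "prime C" "prime D"
    and "distinct [A, B, C, D]"
  shows "sqrt (real (A * B * C * D)) \<notin> \<rat>"
proof -
  have "\<not> A dvd B * C * D"
    using assms by (auto simp: prime_dvd_mult_iff dest: primes_dvd_imp_eq)
  then show ?thesis
    using sqrt_prime_mult_not_Rats[OF \<open>prime A\<close>] by (metis mult.assoc)
qed

lemma sqrt_mult_Rats_if_lincomb:
  fixes x y z :: real and P Q R :: nat
  assumes "x \<in> \<rat>" "y \<in> \<rat>" "z \<in> \<rat>" "y \<noteq> 0" "z \<noteq> 0"
    and "x * sqrt P = y * sqrt Q + z * sqrt R"
  shows "sqrt (real (Q * R)) \<in> \<rat>"
proof -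
  have "(x * sqrt P)\<^sup>2 = (y * sqrt Q + z * sqrt R)\<^sup>2"
    using assms(6) by simp
  then have "x\<^sup>2 * P = y\<^sup>2 * Q + z\<^sup>2 * R + 2 * y * z * sqrt (real (Q * R))"
    by (simp add: power2_eq_square algebra_simps real_sqrt_mult)
  then have "sqrt (real (Q * R)) = (x\<^sup>2 * P - y\<^sup>2 * Q - z\<^sup>2 * R) / (2 * y * z)"
    using assms(4,5) by (simp add: field_simps)
  also have "\<dots> \<in> \<rat>"
    using assms(1-3) by simp
  finally show ?thesis .
qed

lemma sqrt_mult_Rats_if_equal_lincombs:
  fixes u v :: real and A B C D :: nat
  assumes "u \<in> \<rat>" "v \<in> \<rat>" "u \<noteq> 0" "v \<noteq> 0"
    and "u * sqrt A + v * sqrt B = u * sqrt C + v * sqrt D"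
  shows "sqrt (real (A * B * C * D)) \<in> \<rat>"
proof -
  define s where "s = sqrt A * sqrt B - sqrt C * sqrt D"
  have "(u * sqrt A + v * sqrt B)\<^sup>2 = (u * sqrt C + v * sqrt D)\<^sup>2"
    using assms(5) by simp
  then have "s = (u\<^sup>2 * C + v\<^sup>2 * D - u\<^sup>2 * A - v\<^sup>2 * B) / (2 * u * v)"
    using assms(3,4) unfolding s_def by (simp add: power2_eq_square field_simps)
  then have "s \<in> \<rat>"
    using assms(1,2) by simp
  have "s\<^sup>2 = A * B + C * D - 2 * sqrt (real (A * B * C * D))"
    unfolding s_def by (simp add: power2_eq_square algebra_simps real_sqrt_mult)
  then have "sqrt (real (A * B * C * D)) = (A * B + C * D - s\<^sup>2) / 2"
    by simp
  also have "\<dots> \<in> \<rat>"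
    using \<open>s \<in> \<rat>\<close> by simp
  finally show ?thesis .
qed

lemma lincomb_sqrt_distinct_primes_ne:
  fixes x y z :: real and P Q R :: nat
  assumes "x \<in> \<rat>" "y \<in> \<rat>" "z \<in> \<rat>" "y \<noteq> 0" "z \<noteq> 0"
    and "prime Q" "prime R" "Q \<noteq> R"
  shows "x * sqrt P \<noteq> y * sqrt Q + z * sqrt R"
  using assms sqrt_mult_Rats_if_lincomb sqrt_mult_distinct_primes_not_Rats by blast

lemma sqrt_prime_diffs_not_Rats_proportional:
  fixes a b c d :: nat and m n :: real
  assumes primes: "prime a" "prime b" "prime c" "prime d"
    and "a \<noteq> b" "c \<noteq> d" "{a, b} \<noteq> {c, d}"
    and "m \<in> \<rat>" "n \<in> \<rat>" "m \<noteq> 0" "n \<noteq> 0"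
  shows "m * (sqrt a - sqrt b) \<noteq> n * (sqrt c - sqrt d)"
proof
  assume eq: "m * (sqrt a - sqrt b) = n * (sqrt c - sqrt d)"
  consider "a = c" | "a = d" | "b = c" | "b = d" | "distinct [a, b, c, d]"
    using assms(5,6) by auto
  then show False
  proof cases
    case 1
    then have "b \<noteq> d" using assms(7) by auto
    then have "(m - n) * sqrt a \<noteq> m * sqrt b + (- n) * sqrt d"
      using primes assms(8-11) by (intro lincomb_sqrt_distinct_primes_ne) auto
    with eq 1 show False
      by (simp add: algebra_simps)
  next
    case 2
    then have "b \<noteq> c" using assms(7) by auto
    then have "(m + n) * sqrt a \<noteq> m * sqrt b + n * sqrt c"
      using primes assms(8-11) by (intro lincomb_sqrt_distinct_primes_ne) auto
    with eq 2 show False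
      by (simp add: algebra_simps)
  next
    case 3
    then have "a \<noteq> d" using assms(7) by auto
    then have "(m + n) * sqrt b \<noteq> m * sqrt a + n * sqrt d"
      using primes assms(8-11) by (intro lincomb_sqrt_distinct_primes_ne) auto
    with eq 3 show False
      by (simp add: algebra_simps)
  next
    case 4
    then have "a \<noteq> c" using assms(7) by auto
    then have "(m - n) * sqrt b \<noteq> m * sqrt a + (- n) * sqrt c"
      using primes assms(8-11) by (intro lincomb_sqrt_distinct_primes_ne) auto
    with eq 4 show False
      by (simp add: algebra_simps)
  next
    case 5
    from eq have "m * sqrt a + n * sqrt d = m * sqrt b + n * sqrt c"
      by (simp add: algebra_simps)
    then have "sqrt (real (a * d * b * c)) \<in> \<rat>"
      by (rule sqrt_mult_Rats_if_equal_lincombs[OF assms(8-11)])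
    moreover have "sqrt (real (a * d * b * c)) \<notin> \<rat>"
      using 5 primes by (intro sqrt_mult_four_distinct_primes_not_Rats) auto
    ultimately show False
      by contradiction
  qed
qed

lemma mult_periods_eq_iff:
  fixes \<alpha> \<beta> m n :: real
  assumes "\<alpha> \<noteq> 0" "\<beta> \<noteq> 0"
  shows "m * (2 * pi / \<bar>\<alpha>\<bar>) = n * (2 * pi / \<bar>\<beta>\<bar>) \<longleftrightarrow> m * \<bar>\<beta>\<bar> = n * \<bar>\<alpha>\<bar>"
  using assms by (simp add: field_simps)

theorem lemma1:
  fixes p :: "nat \<Rightarrow> nat" and N i j i' j' :: nat
  assumes primes: "\<And>m. m \<in> {1..N} \<Longrightarrow> prime (p m)"
    and incr: "\<And>m m'. m \<in> {1..N} \<Longrightarrow> m' \<in> {1..N} \<Longrightarrow> m < m' \<Longrightarrow> p m < p m'"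
    and ij: "1 \<le> j" "j < i" "i \<le> N"
    and ij': "1 \<le> j'" "j' < i'" "i' \<le> N"
    and diff: "{i, j} \<noteq> {i', j'}"
  shows "\<not> (\<exists>n1 n2 :: int. n1 \<noteq> 0 \<and> n2 \<noteq> 0 \<and>
            of_int n1 * period p i j = of_int n2 * period p i' j')"
proof clarify
  fix n1 n2 :: int
  assume "n1 \<noteq> 0" "n2 \<noteq> 0"
    and eq: "of_int n1 * period p i j = of_int n2 * period p i' j'"
  have indices: "{i, j, i', j'} \<subseteq> {1..N}"
    using ij ij' by auto
  have "inj_on p {1..N}"
    using incr by (intro strict_mono_on_imp_inj_on strict_mono_onI)
  then have "p ` {i, j} \<noteq> p ` {i', j'}"
    using diff indices by (subst inj_on_image_eq_iff) auto
  then have "{p i, p j} \<noteq> {p i', p j'}"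
    by simp
  have "p j < p i" "p j' < p i'"
    using incr indices ij ij' by auto
  then have "wavenum p j < wavenum p i" "wavenum p j' < wavenum p i'"
    by (simp_all add: wavenum_def)
  with eq have "of_int n1 * \<bar>wavenum p i' - wavenum p j'\<bar>
      = of_int n2 * \<bar>wavenum p i - wavenum p j\<bar>"
    unfolding period_def by (subst (asm) mult_periods_eq_iff) auto
  then have "of_int n2 * (sqrt (p i) - sqrt (p j)) = of_int n1 * (sqrt (p i') - sqrt (p j'))"
    using \<open>wavenum p j < wavenum p i\<close> \<open>wavenum p j' < wavenum p i'\<close>
    by (simp add: wavenum_def)
  moreover have "of_int n2 * (sqrt (p i) - sqrt (p j)) \<noteq> of_int n1 * (sqrt (p i') - sqrt (p j'))"
    using primes indices \<open>p j < p i\<close> \<open>p j' < p i'\<close> \<open>{p i, p j} \<noteq> {p i', p j'}\<close>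
      \<open>n1 \<noteq> 0\<close> \<open>n2 \<noteq> 0\<close>
    by (intro sqrt_prime_diffs_not_Rats_proportional) auto
  ultimately show False
    by contradiction
qed

end
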